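(* Let $k\ge0$, let $A,B$ be finite alphabets and $f:B^*\to A^*$ a monoid homomorphism. For $w_1,w_2\in B^*$, if $w_1\equiv_k w_2$ then $f(w_1)\equiv_k f(w_2)$.
   Context: For words $u_1,u_2$ over an alphabet, $u_1\equiv_k u_2$ means that $u_1$ and $u_2$ satisfy exactly the same sentences of $FO^2[<,\mathrm{Inv}]$ of quantifier depth at most $k$ (over that alphabet). $FO^2[<,\mathrm{Inv}]$ is two-variable first-order logic with $<$, unary letter predicates $a(x)$, and binary predicates $a(x,y)$ meaning that $a$ occurs at some position strictly between $x$ and $y$. *)

theory Defs
  imports Main
begin

text \<open>Two-variable first-order logic FO2[<,Inv] over an alphabet (the type 'a).
  Positions of a word w are 0 ..< length w.\<close>

datatype var = VX | VY

datatype 'a fo2 =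
    FLess var var
  | FEq var var
  | FLetter 'a var
  | FBetween 'a var var
  | FNot "'a fo2"
  | FAnd "'a fo2" "'a fo2"
  | FOr "'a fo2" "'a fo2"
  | FEx var "'a fo2"

fun qdepth :: "'a fo2 \<Rightarrow> nat" where
  "qdepth (FLess _ _) = 0"
| "qdepth (FEq _ _) = 0"
| "qdepth (FLetter _ _) = 0"
| "qdepth (FBetween _ _ _) = 0"
| "qdepth (FNot \<phi>) = qdepth \<phi>"
| "qdepth (FAnd \<phi> \<psi>) = max (qdepth \<phi>) (qdepth \<psi>)"
| "qdepth (FOr \<phi> \<psi>) = max (qdepth \<phi>) (qdepth \<psi>)"
| "qdepth (FEx _ \<phi>) = Suc (qdepth \<phi>)"

fun fvars :: "'a fo2 \<Rightarrow> var set" where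
  "fvars (FLess x y) = {x, y}"
| "fvars (FEq x y) = {x, y}"
| "fvars (FLetter _ x) = {x}"
| "fvars (FBetween _ x y) = {x, y}"
| "fvars (FNot \<phi>) = fvars \<phi>"
| "fvars (FAnd \<phi> \<psi>) = fvars \<phi> \<union> fvars \<psi>"
| "fvars (FOr \<phi> \<psi>) = fvars \<phi> \<union> fvars \<psi>"
| "fvars (FEx x \<phi>) = fvars \<phi> - {x}"

definition sentence :: "'a fo2 \<Rightarrow> bool" where
  "sentence \<phi> \<longleftrightarrow> fvars \<phi> = {}"

fun sat :: "'a list \<Rightarrow> (var \<Rightarrow> nat) \<Rightarrow> 'a fo2 \<Rightarrow> bool" where
  "sat w s (FLess x y) \<longleftrightarrow> s x < s y"
| "sat w s (FEq x y) \<longleftrightarrow> s x = s y"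
| "sat w s (FLetter a x) \<longleftrightarrow> s x < length w \<and> w ! s x = a"
| "sat w s (FBetween a x y) \<longleftrightarrow>
     (\<exists>z. min (s x) (s y) < z \<and> z < max (s x) (s y) \<and> z < length w \<and> w ! z = a)"
| "sat w s (FNot \<phi>) \<longleftrightarrow> \<not> sat w s \<phi>"
| "sat w s (FAnd \<phi> \<psi>) \<longleftrightarrow> sat w s \<phi> \<and> sat w s \<psi>"
| "sat w s (FOr \<phi> \<psi>) \<longleftrightarrow> sat w s \<phi> \<or> sat w s \<psi>"
| "sat w s (FEx x \<phi>) \<longleftrightarrow> (\<exists>i < length w. sat w (s(x := i)) \<phi>)"

text \<open>A word models a sentence (the assignment is irrelevant for sentences).\<close>
definition models :: "'a list \<Rightarrow> 'a fo2 \<Rightarrow> bool" where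
  "models w \<phi> \<longleftrightarrow> sat w (\<lambda>_. 0) \<phi>"

definition fo2_equiv :: "nat \<Rightarrow> 'a list \<Rightarrow> 'a list \<Rightarrow> bool" where
  "fo2_equiv k u1 u2 \<longleftrightarrow>
     (\<forall>\<phi> :: 'a fo2. sentence \<phi> \<and> qdepth \<phi> \<le> k \<longrightarrow> (models u1 \<phi> \<longleftrightarrow> models u2 \<phi>))"

definition monoid_hom :: "('b list \<Rightarrow> 'a list) \<Rightarrow> bool" where
  "monoid_hom f \<longleftrightarrow> f [] = [] \<and> (\<forall>u v. f (u @ v) = f u @ f v)"

end

theory Submission
  imports Defs
begin

text \<open>A position of \<open>concat (map g w)\<close> is a pair: a position \<open>i\<close> of \<open>w\<close> and an offset
  \<open>r < length (g (w ! i))\<close> into the block \<open>g (w ! i)\<close>. Since the alphabet of \<open>w\<close> is finite, the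
  offsets are bounded, so a formula about \<open>concat (map g w)\<close> can be translated into a formula
  about \<open>w\<close> of the same quantifier depth: the offset of each variable is carried along as a
  parameter of the translation, a quantifier becomes a quantifier followed by a finite
  disjunction over the offset, and the atomic formulas become Boolean combinations of letter,
  order and betweenness conditions on \<open>w\<close>.\<close>

definition block_pos :: "('b \<Rightarrow> 'a list) \<Rightarrow> 'b list \<Rightarrow> nat \<Rightarrow> nat \<Rightarrow> nat" where
  "block_pos g w i r = length (concat (map g (take i w))) + r"

lemma concat_map_split_nth:
  assumes "i < length w"
  shows "concat (map g w) = concat (map g (take i w)) @ g (w ! i) @ concat (map g (drop (Suc i) w))"
proof -
  have "w = take i w @ w ! i # drop (Suc i) w"
    using assms by (simp add: id_take_nth_drop)
  then show ?thesis
    by (metis concat.simps(2) concat_append list.simps(9) map_append)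
qed

lemma block_pos_less_block_pos_iff:
  assumes "i < length w" "r < length (g (w ! i))" "j < length w" "r' < length (g (w ! j))"
  shows "block_pos g w i r < block_pos g w j r' \<longleftrightarrow> i < j \<or> i = j \<and> r < r'"
proof -
  have earlier: "block_pos g w m q < block_pos g w n q'"
    if "m < n" "m < length w" "q < length (g (w ! m))" for m n q q'
  proof -
    have "take n w = take (Suc m) w @ take (n - Suc m) (drop (Suc m) w)"
      using \<open>m < n\<close> by (metis Suc_leI le_add_diff_inverse take_add)
    then have "length (concat (map g (take (Suc m) w))) \<le> length (concat (map g (take n w)))"
      by simp
    with that show ?thesis
      by (simp add: block_pos_def take_Suc_conv_app_nth)
  qed
  show ?thesis
    using earlier[of i j r r'] earlier[of j i r' r] assms
    by (cases i j rule: linorder_cases) (auto simp: block_pos_def)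
qed

lemma block_pos_less_length:
  assumes "i < length w" "r < length (g (w ! i))"
  shows "block_pos g w i r < length (concat (map g w))"
  using assms by (subst concat_map_split_nth[OF assms(1)]) (simp add: block_pos_def)

lemma nth_concat_block_pos:
  assumes "i < length w" "r < length (g (w ! i))"
  shows "concat (map g w) ! block_pos g w i r = g (w ! i) ! r"
  using assms by (subst concat_map_split_nth[OF assms(1)]) (simp add: block_pos_def nth_append)

lemma ex_block_pos:
  "p < length (concat (map g w)) \<Longrightarrow> \<exists>i < length w. \<exists>r < length (g (w ! i)). p = block_pos g w i r"
proof (induction w arbitrary: p)
  case Nil
  then show ?case by simp
next
  case (Cons b w)
  show ?case
  proof (cases "p < length (g b)")
    case True
    then show ?thesis by (intro exI[of _ 0]) (auto simp: block_pos_def)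
  next
    case False
    with Cons.prems have "p - length (g b) < length (concat (map g w))"
      by simp
    then obtain i r where "i < length w" "r < length (g (w ! i))"
      "p - length (g b) = block_pos g w i r"
      using Cons.IH by blast
    with False show ?thesis
      by (intro exI[of _ "Suc i"]) (auto simp: block_pos_def)
  qed
qed

lemma in_set_drop_iff: "a \<in> set (drop n u) \<longleftrightarrow> (\<exists>r. n \<le> r \<and> r < length u \<and> u ! r = a)"
proof
  assume "a \<in> set (drop n u)"
  then obtain i where "i < length u - n" "u ! (n + i) = a"
    by (auto simp: in_set_conv_nth)
  then show "\<exists>r. n \<le> r \<and> r < length u \<and> u ! r = a"
    by (intro exI[of _ "n + i"]) auto
next
  assume "\<exists>r. n \<le> r \<and> r < length u \<and> u ! r = a"
  then obtain r where "n \<le> r" "r < length u" "u ! r = a" by blast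
  then have "r - n < length (drop n u)" "drop n u ! (r - n) = a" by auto
  then show "a \<in> set (drop n u)" by (metis nth_mem)
qed

lemma in_set_take_iff: "a \<in> set (take n u) \<longleftrightarrow> (\<exists>r < n. r < length u \<and> u ! r = a)"
  by (auto simp: in_set_conv_nth)

definition occurs_between :: "'a list \<Rightarrow> 'a \<Rightarrow> nat \<Rightarrow> nat \<Rightarrow> bool" where
  "occurs_between u a p q \<longleftrightarrow> (\<exists>z. min p q < z \<and> z < max p q \<and> z < length u \<and> u ! z = a)"

lemma occurs_between_commute: "occurs_between u a p q \<longleftrightarrow> occurs_between u a q p"
  by (simp add: occurs_between_def min.commute max.commute)

lemma occurs_between_concat_iff:
  "occurs_between (concat (map g w)) a p q \<longleftrightarrow>
    (\<exists>m < length w. \<exists>r < length (g (w ! m)).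
       min p q < block_pos g w m r \<and> block_pos g w m r < max p q \<and> g (w ! m) ! r = a)"
  unfolding occurs_between_def
  by (metis ex_block_pos block_pos_less_length nth_concat_block_pos)

lemma occurs_between_concat_distinct_blocks:
  assumes "i < length w" "ox < length (g (w ! i))" "j < length w" "oy < length (g (w ! j))"
    and "i < j"
  shows "occurs_between (concat (map g w)) a (block_pos g w i ox) (block_pos g w j oy) \<longleftrightarrow>
    a \<in> set (drop (Suc ox) (g (w ! i))) \<or> a \<in> set (take oy (g (w ! j))) \<or>
    (\<exists>m. i < m \<and> m < j \<and> a \<in> set (g (w ! m)))"
proof -
  have "block_pos g w i ox < block_pos g w j oy"
    using block_pos_less_block_pos_iff assms by blast
  then have "occurs_between (concat (map g w)) a (block_pos g w i ox) (block_pos g w j oy) \<longleftrightarrow>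
    (\<exists>m < length w. \<exists>r < length (g (w ! m)).
       block_pos g w i ox < block_pos g w m r \<and> block_pos g w m r < block_pos g w j oy \<and>
       g (w ! m) ! r = a)"
    unfolding occurs_between_concat_iff by simp
  also have "\<dots> \<longleftrightarrow> (\<exists>m < length w. \<exists>r < length (g (w ! m)).
       (i < m \<or> i = m \<and> ox < r) \<and> (m < j \<or> m = j \<and> r < oy) \<and> g (w ! m) ! r = a)"
    using block_pos_less_block_pos_iff assms by (metis (no_types, lifting))
  also have "\<dots> \<longleftrightarrow>
    (\<exists>r. ox < r \<and> r < length (g (w ! i)) \<and> g (w ! i) ! r = a) \<or>
    (\<exists>r < oy. r < length (g (w ! j)) \<and> g (w ! j) ! r = a) \<or>
    (\<exists>m. i < m \<and> m < j \<and> (\<exists>r < length (g (w ! m)). g (w ! m) ! r = a))"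
    using assms by (auto 4 3 intro: less_trans)
  also have "\<dots> \<longleftrightarrow>
    a \<in> set (drop (Suc ox) (g (w ! i))) \<or> a \<in> set (take oy (g (w ! j))) \<or>
    (\<exists>m. i < m \<and> m < j \<and> a \<in> set (g (w ! m)))"
    by (simp only: in_set_drop_iff in_set_take_iff) (auto simp: in_set_conv_nth Suc_le_eq)
  finally show ?thesis .
qed

lemma occurs_between_concat_same_block:
  assumes "i < length w" "ox < length (g (w ! i))" "oy < length (g (w ! i))"
  shows "occurs_between (concat (map g w)) a (block_pos g w i ox) (block_pos g w i oy) \<longleftrightarrow>
    occurs_between (g (w ! i)) a ox oy"
proof -
  have min: "min (block_pos g w i ox) (block_pos g w i oy) = block_pos g w i (min ox oy)"
    and max: "max (block_pos g w i ox) (block_pos g w i oy) = block_pos g w i (max ox oy)"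
    by (simp_all add: block_pos_def min_def max_def)
  have "block_pos g w i (min ox oy) < block_pos g w m r \<and> block_pos g w m r < block_pos g w i (max ox oy)
      \<longleftrightarrow> m = i \<and> min ox oy < r \<and> r < max ox oy"
    if "m < length w" "r < length (g (w ! m))" for m r
    using that assms block_pos_less_block_pos_iff[of _ w _ g] by (auto simp: min_def max_def)
  then show ?thesis
    unfolding occurs_between_concat_iff min max using assms
    by (auto simp: occurs_between_def)
qed

definition universe_list :: "'b::finite list" where
  "universe_list = (SOME bs. set bs = UNIV)"

lemma set_universe_list [simp]: "set (universe_list :: 'b::finite list) = UNIV"
  unfolding universe_list_def by (rule someI_ex) (rule finite_list[OF finite_UNIV])

lemma sat_foldr_FOr: "sat w s (foldr FOr \<phi>s \<psi>) \<longleftrightarrow> sat w s \<psi> \<or> (\<exists>\<phi> \<in> set \<phi>s. sat w s \<phi>)"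
  by (induction \<phi>s) auto

lemma fvars_foldr_FOr: "fvars (foldr FOr \<phi>s \<psi>) = fvars \<psi> \<union> (\<Union>\<phi> \<in> set \<phi>s. fvars \<phi>)"
  by (induction \<phi>s) auto

lemma qdepth_foldr_FOr_le_iff:
  "qdepth (foldr FOr \<phi>s \<psi>) \<le> n \<longleftrightarrow> qdepth \<psi> \<le> n \<and> (\<forall>\<phi> \<in> set \<phi>s. qdepth \<phi> \<le> n)"
  by (induction \<phi>s) auto

text \<open>The logic has no constant for falsity; \<open>FFalse x\<close> is false but has \<open>x\<close> free.\<close>

definition FFalse :: "var \<Rightarrow> 'a fo2" where
  "FFalse x = FNot (FEq x x)"

definition letter_in :: "var \<Rightarrow> ('b::finite \<Rightarrow> bool) \<Rightarrow> 'b fo2" where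
  "letter_in x P = foldr FOr (map (\<lambda>b. FLetter b x) (filter P universe_list)) (FFalse x)"

definition letter_between :: "var \<Rightarrow> var \<Rightarrow> ('b::finite \<Rightarrow> bool) \<Rightarrow> 'b fo2" where
  "letter_between x y P = foldr FOr (map (\<lambda>b. FBetween b x y) (filter P universe_list)) (FFalse x)"

lemma sat_letter_in [simp]: "sat w s (letter_in x P) \<longleftrightarrow> s x < length w \<and> P (w ! s x)"
  by (auto simp: letter_in_def sat_foldr_FOr FFalse_def)

lemma sat_letter_between [simp]:
  "sat w s (letter_between x y P) \<longleftrightarrow>
    (\<exists>m. min (s x) (s y) < m \<and> m < max (s x) (s y) \<and> m < length w \<and> P (w ! m))"
  by (auto simp: letter_between_def sat_foldr_FOr FFalse_def)

lemma fvars_letter_in: "fvars (letter_in x P) \<subseteq> {x}"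
  by (auto simp: letter_in_def fvars_foldr_FOr FFalse_def)

lemma fvars_letter_between: "fvars (letter_between x y P) \<subseteq> {x, y}"
  by (auto simp: letter_between_def fvars_foldr_FOr FFalse_def)

lemma qdepth_letter_in [simp]: "qdepth (letter_in x P) = 0"
proof -
  have "qdepth (letter_in x P) \<le> 0"
    unfolding letter_in_def qdepth_foldr_FOr_le_iff by (simp add: FFalse_def)
  then show ?thesis by simp
qed

lemma qdepth_letter_between [simp]: "qdepth (letter_between x y P) = 0"
proof -
  have "qdepth (letter_between x y P) \<le> 0"
    unfolding letter_between_def qdepth_foldr_FOr_le_iff by (simp add: FFalse_def)
  then show ?thesis by simp
qed

definition between_blocks :: "('b::finite \<Rightarrow> 'a list) \<Rightarrow> 'a \<Rightarrow> var \<Rightarrow> var \<Rightarrow> nat \<Rightarrow> nat \<Rightarrow> 'b fo2" where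
  "between_blocks g a x y ox oy =
     FOr (letter_in x (\<lambda>b. a \<in> set (drop (Suc ox) (g b))))
       (FOr (letter_in y (\<lambda>b. a \<in> set (take oy (g b))))
         (letter_between x y (\<lambda>b. a \<in> set (g b))))"

text \<open>\<open>translate g \<phi> ofs\<close> holds in \<open>w\<close> at positions \<open>s\<close> iff \<open>\<phi>\<close> holds in \<open>concat (map g w)\<close>
  at the positions \<open>block_pos g w (s x) (ofs x)\<close> (see \<open>sat_translate\<close>).\<close>

fun translate :: "('b::finite \<Rightarrow> 'a list) \<Rightarrow> 'a fo2 \<Rightarrow> (var \<Rightarrow> nat) \<Rightarrow> 'b fo2" where
  "translate g (FLess x y) ofs = (if ofs x < ofs y then FOr (FLess x y) (FEq x y) else FLess x y)"
| "translate g (FEq x y) ofs = (if ofs x = ofs y then FEq x y else FFalse x)"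
| "translate g (FLetter a x) ofs = letter_in x (\<lambda>b. ofs x < length (g b) \<and> g b ! ofs x = a)"
| "translate g (FBetween a x y) ofs =
     FOr (FAnd (FLess x y) (between_blocks g a x y (ofs x) (ofs y)))
       (FOr (FAnd (FLess y x) (between_blocks g a y x (ofs y) (ofs x)))
         (FAnd (FEq x y) (letter_in x (\<lambda>b. occurs_between (g b) a (ofs x) (ofs y)))))"
| "translate g (FNot \<phi>) ofs = FNot (translate g \<phi> ofs)"
| "translate g (FAnd \<phi> \<psi>) ofs = FAnd (translate g \<phi> ofs) (translate g \<psi> ofs)"
| "translate g (FOr \<phi> \<psi>) ofs = FOr (translate g \<phi> ofs) (translate g \<psi> ofs)"
| "translate g (FEx x \<phi>) ofs =
     FEx x (foldr FOr
       (map (\<lambda>r. FAnd (letter_in x (\<lambda>b. r < length (g b))) (translate g \<phi> (ofs(x := r))))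
         [0..<Max (range (\<lambda>b. length (g b)))])
       (FFalse x))"

lemma fvars_translate: "fvars (translate g \<phi> ofs) \<subseteq> fvars \<phi>"
proof (induction \<phi> arbitrary: ofs)
  case (FLetter a x)
  then show ?case using fvars_letter_in by simp
next
  case (FBetween a x y)
  then show ?case
    using fvars_letter_in fvars_letter_between
    by (simp add: between_blocks_def) blast
next
  case (FEx x \<phi>)
  then show ?case
    using fvars_letter_in by (fastforce simp: fvars_foldr_FOr FFalse_def)
qed (auto simp: FFalse_def)

lemma qdepth_translate: "qdepth (translate g \<phi> ofs) \<le> qdepth \<phi>"
proof (induction \<phi> arbitrary: ofs)
  case (FAnd \<phi> \<psi>)
  then show ?case by (simp add: max.coboundedI1 max.coboundedI2)
next
  case (FOr \<phi> \<psi>)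
  then show ?case by (simp add: max.coboundedI1 max.coboundedI2)
next
  case (FEx x \<phi>)
  then show ?case by (simp add: qdepth_foldr_FOr_le_iff FFalse_def)
qed (simp_all add: between_blocks_def FFalse_def)

definition represents ::
  "('b \<Rightarrow> 'a list) \<Rightarrow> 'b list \<Rightarrow> (var \<Rightarrow> nat) \<Rightarrow> (var \<Rightarrow> nat) \<Rightarrow> (var \<Rightarrow> nat) \<Rightarrow> var \<Rightarrow> bool" where
  "represents g w s ofs s' z \<longleftrightarrow>
     s z < length w \<and> ofs z < length (g (w ! s z)) \<and> s' z = block_pos g w (s z) (ofs z)"

lemma sat_between_blocks:
  assumes "represents g w s ofs s' x" "represents g w s ofs s' y" "s x < s y"
  shows "sat w s (between_blocks g a x y (ofs x) (ofs y)) \<longleftrightarrow>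
    occurs_between (concat (map g w)) a (s' x) (s' y)"
  using assms occurs_between_concat_distinct_blocks[of "s x" w "ofs x" g "s y" "ofs y" a]
  by (auto simp: represents_def between_blocks_def dest: order.strict_trans)

lemma length_le_Max_range_length: "length (g b) \<le> Max (range (\<lambda>b::'b::finite. length (g b)))"
  by (simp add: Max_ge)

lemma sat_translate:
  assumes "\<And>z. z \<in> fvars \<phi> \<Longrightarrow> represents g w s ofs s' z"
  shows "sat (concat (map g w)) s' \<phi> \<longleftrightarrow> sat w s (translate g \<phi> ofs)"
  using assms
proof (induction \<phi> arbitrary: s ofs s')
  case (FLess x y)
  then show ?case
    by (auto simp: represents_def block_pos_less_block_pos_iff)
next
  case (FEq x y)
  then have "s' x < s' y \<longleftrightarrow> s x < s y \<or> s x = s y \<and> ofs x < ofs y"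
    and "s' y < s' x \<longleftrightarrow> s y < s x \<or> s y = s x \<and> ofs y < ofs x"
    by (auto simp: represents_def block_pos_less_block_pos_iff)
  then have "s' x = s' y \<longleftrightarrow> s x = s y \<and> ofs x = ofs y"
    by (metis linorder_neqE_nat not_less_iff_gr_or_eq)
  then show ?case by (simp add: FFalse_def)
next
  case (FLetter a x)
  then show ?case
    by (auto simp: represents_def block_pos_less_length nth_concat_block_pos)
next
  case (FBetween a x y)
  then have x: "represents g w s ofs s' x" and y: "represents g w s ofs s' y" by auto
  have "sat (concat (map g w)) s' (FBetween a x y) \<longleftrightarrow>
    occurs_between (concat (map g w)) a (s' x) (s' y)"
    by (simp add: occurs_between_def)
  also have "\<dots> \<longleftrightarrow> sat w s (translate g (FBetween a x y) ofs)"
  proof (cases "s x" "s y" rule: linorder_cases)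
    case less
    then show ?thesis using sat_between_blocks[OF x y] by simp
  next
    case greater
    then show ?thesis using sat_between_blocks[OF y x] by (simp add: occurs_between_commute)
  next
    case equal
    then show ?thesis
      using x y occurs_between_concat_same_block[of "s x" w "ofs x" g "ofs y" a]
      by (simp add: represents_def)
  qed
  finally show ?case .
next
  case (FNot \<phi>)
  then show ?case by simp
next
  case (FAnd \<phi> \<psi>)
  have "sat (concat (map g w)) s' \<phi> \<longleftrightarrow> sat w s (translate g \<phi> ofs)"
    "sat (concat (map g w)) s' \<psi> \<longleftrightarrow> sat w s (translate g \<psi> ofs)"
    by (rule FAnd.IH; simp add: FAnd.prems)+
  then show ?case by simp
next
  case (FOr \<phi> \<psi>)
  have "sat (concat (map g w)) s' \<phi> \<longleftrightarrow> sat w s (translate g \<phi> ofs)"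
    "sat (concat (map g w)) s' \<psi> \<longleftrightarrow> sat w s (translate g \<psi> ofs)"
    by (rule FOr.IH; simp add: FOr.prems)+
  then show ?case by simp
next
  case (FEx x \<phi>)
  let ?W = "concat (map g w)"
  have IH: "sat ?W (s'(x := block_pos g w i r)) \<phi> \<longleftrightarrow> sat w (s(x := i)) (translate g \<phi> (ofs(x := r)))"
    if "i < length w" "r < length (g (w ! i))" for i r
    by (rule FEx.IH) (use FEx.prems that in \<open>auto simp: represents_def\<close>)
  have "sat w s (translate g (FEx x \<phi>) ofs) \<longleftrightarrow>
    (\<exists>i < length w. \<exists>r < Max (range (\<lambda>b. length (g b))).
       r < length (g (w ! i)) \<and> sat w (s(x := i)) (translate g \<phi> (ofs(x := r))))"
    by (auto simp: sat_foldr_FOr FFalse_def atLeast0LessThan)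
  also have "\<dots> \<longleftrightarrow>
    (\<exists>i < length w. \<exists>r < length (g (w ! i)). sat w (s(x := i)) (translate g \<phi> (ofs(x := r))))"
    using less_le_trans[OF _ length_le_Max_range_length] by blast
  also have "\<dots> \<longleftrightarrow> (\<exists>i < length w. \<exists>r < length (g (w ! i)). sat ?W (s'(x := block_pos g w i r)) \<phi>)"
    using IH by blast
  also have "\<dots> \<longleftrightarrow> (\<exists>p < length ?W. sat ?W (s'(x := p)) \<phi>)"
    by (metis ex_block_pos block_pos_less_length)
  finally show ?case by simp
qed

lemma models_concat_map_iff:
  assumes "sentence \<phi>"
  shows "models (concat (map g w)) \<phi> \<longleftrightarrow> models w (translate g \<phi> (\<lambda>_. 0))"
  using assms unfolding models_def sentence_def by (intro sat_translate) simp

lemma fo2_equiv_concat_map: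
  fixes g :: "'b::finite \<Rightarrow> 'a list"
  assumes "fo2_equiv k w1 w2"
  shows "fo2_equiv k (concat (map g w1)) (concat (map g w2))"
  unfolding fo2_equiv_def
proof (intro allI impI)
  fix \<phi> :: "'a fo2"
  assume \<phi>: "sentence \<phi> \<and> qdepth \<phi> \<le> k"
  then have "sentence (translate g \<phi> (\<lambda>_. 0)) \<and> qdepth (translate g \<phi> (\<lambda>_. 0)) \<le> k"
    using fvars_translate[of g \<phi> "\<lambda>_. 0"] qdepth_translate[of g \<phi> "\<lambda>_. 0"]
    by (auto simp: sentence_def)
  with assms \<phi> show "models (concat (map g w1)) \<phi> \<longleftrightarrow> models (concat (map g w2)) \<phi>"
    by (simp add: models_concat_map_iff fo2_equiv_def)
qed

lemma monoid_hom_eq_concat_map: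
  assumes "monoid_hom f"
  shows "f w = concat (map (\<lambda>b. f [b]) w)"
proof (induction w)
  case Nil
  show ?case using assms by (simp add: monoid_hom_def)
next
  case (Cons b w)
  have "f (b # w) = f [b] @ f w"
    using assms unfolding monoid_hom_def by (metis append_Cons append_Nil)
  with Cons.IH show ?case by simp
qed

theorem lemma13:
  fixes k :: nat
    and f :: "'b::finite list \<Rightarrow> 'a::finite list"
    and w1 w2 :: "'b list"
  assumes "monoid_hom f"
    and "fo2_equiv k w1 w2"
  shows "fo2_equiv k (f w1) (f w2)"
proof -
  have "f w1 = concat (map (\<lambda>b. f [b]) w1)" "f w2 = concat (map (\<lambda>b. f [b]) w2)"
    using assms(1) by (rule monoid_hom_eq_concat_map)+
  then show ?thesis
    using fo2_equiv_concat_map[OF assms(2)] by metis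
qed

end
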